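(* (a) The minimal Lagrangian fibres of a cohomogeneity-1 toric Kähler metric on $\mathbb{CP}^2$ sit above the diagonal $\triangle=\{x_1=x_2\}$ in the standard simplex $P$. (b) A cohomogeneity-1 toric Kähler metric on $\mathbb{CP}^2$ which is analytic admits a finite set of minimal Lagrangian fibres. (c) There is a (non-analytic) cohomogeneity-1 toric Kähler metric on $\mathbb{CP}^2$ which admits a continuum of minimal Lagrangian fibres. (d) Given a finite subset $\{p_1,\dots,p_k\}\subset \mathrm{int}\, P\cap \triangle$, there is a cohomogeneity-1 toric Kähler metric on $\mathbb{CP}^2$ whose set of minimal Lagrangian fibres is precisely (the set of fibres over) $\{p_1,\dots,p_k\}$.
   Context: $\mathbb{CP}^2$ is regarded as a toric manifold with moment map $\mu$ whose moment polytope is the standard simplex $P=\{x\in\mathbb{R}^2: l_i(x)\ge 0\}$, with $l_1(x)=x_1$, $l_2(x)=x_2$, $l_3(x)=1-x_1-x_2$. Toric Kähler metrics are described in action-angle coordinates $(x,\theta)$ by a symplectic potential $u$ on $P$, with $g=u_{ij}\,dx^i dx^j+u^{ij}\,d\theta^i d\theta^j$, where $u_{ij}=\partial^2 u/\partial x^i\partial x^j$ and $(u^{ij})$ is its inverse; $u-u_G$ is smooth on a neighbourhood of $P$, where $u_G=\tfrac12\sum_i(l_i\log l_i-l_i)$ is the Guillemin potential. A cohomogeneity-1 toric Kähler metric on $\mathbb{CP}^2$ is one whose symplectic potential has the form $u(x)=u_G(x)+\tfrac12 f(x_1+x_2)$ for a function $f$ of one variable (positivity of the Hessian amounts to $f''(t)>-\frac{1}{t(t-1)}$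 for $0<t<1$). A fibre $\mu^{-1}(x)$, $x\in\mathrm{int}\,P$, is a minimal Lagrangian torus if and only if $x$ is a critical point of the orbital volume function $V=(\det \mathrm{Hess}(u))^{-1/2}$ (equivalently of $\log\det\mathrm{Hess}(u)$); "minimal Lagrangian fibres" refers to such fibres. *)

theory Defs
  imports "HOL-Analysis.Analysis"
begin

definition intP :: "(real \<times> real) set" where
  "intP = {x. 0 < fst x \<and> 0 < snd x \<and> fst x + snd x < 1}"

text \<open>Guillemin potential u_G = 1/2 sum_i (l_i log l_i - l_i).\<close>
definition uG :: "real \<times> real \<Rightarrow> real" where
  "uG x = (let l1 = fst x; l2 = snd x; l3 = 1 - fst x - snd x in
     (l1 * ln l1 - l1 + l2 * ln l2 - l2 + l3 * ln l3 - l3) / 2)"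

definition sympot :: "(real \<Rightarrow> real) \<Rightarrow> real \<times> real \<Rightarrow> real" where
  "sympot f x = uG x + f (fst x + snd x) / 2"

definition pd1 :: "(real \<times> real \<Rightarrow> real) \<Rightarrow> real \<times> real \<Rightarrow> real" where
  "pd1 g x = deriv (\<lambda>s. g (s, snd x)) (fst x)"

definition pd2 :: "(real \<times> real \<Rightarrow> real) \<Rightarrow> real \<times> real \<Rightarrow> real" where
  "pd2 g x = deriv (\<lambda>s. g (fst x, s)) (snd x)"

definition hess :: "(real \<times> real \<Rightarrow> real) \<Rightarrow> real \<times> real \<Rightarrow> nat \<Rightarrow> nat \<Rightarrow> real" where
  "hess u x i j = (let pd = (\<lambda>k. if k = 1 then pd1 else pd2) in pd j (pd i u) x)"

definition hess_det :: "(real \<times> real \<Rightarrow> real) \<Rightarrow> real \<times> real \<Rightarrow> real" where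
  "hess_det u x = hess u x 1 1 * hess u x 2 2 - hess u x 1 2 * hess u x 2 1"

definition hess_posdef :: "(real \<times> real \<Rightarrow> real) \<Rightarrow> real \<times> real \<Rightarrow> bool" where
  "hess_posdef u x \<longleftrightarrow> (\<forall>v1 v2::real. (v1, v2) \<noteq> (0, 0) \<longrightarrow>
      v1 * (hess u x 1 1 * v1 + hess u x 1 2 * v2)
    + v2 * (hess u x 2 1 * v1 + hess u x 2 2 * v2) > 0)"

definition orbital_volume :: "(real \<times> real \<Rightarrow> real) \<Rightarrow> real \<times> real \<Rightarrow> real" where
  "orbital_volume u x = hess_det u x powr (-1/2)"

definition smooth_on :: "real set \<Rightarrow> (real \<Rightarrow> real) \<Rightarrow> bool" where
  "smooth_on U f \<longleftrightarrow> (\<forall>n. \<forall>t\<in>U. ((deriv ^^ n) f) differentiable (at t))"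

definition real_analytic_on :: "real set \<Rightarrow> (real \<Rightarrow> real) \<Rightarrow> bool" where
  "real_analytic_on U f \<longleftrightarrow> (\<forall>t0\<in>U. \<exists>r>0. \<exists>a::nat \<Rightarrow> real.
      \<forall>t. \<bar>t - t0\<bar> < r \<longrightarrow> (\<lambda>n. a n * (t - t0) ^ n) sums f t)"

text \<open>f defines a cohomogeneity-1 toric Kaehler metric on CP^2: u - u_G = f(x1+x2)/2 smooth
  on a neighbourhood of P (i.e. f smooth near [0,1]) and Hess(u) positive definite on int P.\<close>
definition coh1_metric :: "(real \<Rightarrow> real) \<Rightarrow> bool" where
  "coh1_metric f \<longleftrightarrow> (\<exists>U. open U \<and> {0..1} \<subseteq> U \<and> smooth_on U f)
     \<and> (\<forall>x\<in>intP. hess_posdef (sympot f) x)"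

definition analytic_metric :: "(real \<Rightarrow> real) \<Rightarrow> bool" where
  "analytic_metric f \<longleftrightarrow> (\<exists>U. open U \<and> {0..1} \<subseteq> U \<and> real_analytic_on U f)"

text \<open>The fibre over x is a minimal Lagrangian torus: x interior critical point of V.\<close>
definition minimal_fibre :: "(real \<Rightarrow> real) \<Rightarrow> real \<times> real \<Rightarrow> bool" where
  "minimal_fibre f x \<longleftrightarrow> x \<in> intP \<and> (orbital_volume (sympot f) has_derivative (\<lambda>_. 0)) (at x)"

end

theory Submission
  imports
    Defs
    "HOL-Complex_Analysis.Complex_Analysis"
    "HOL-Computational_Algebra.Polynomial"
begin

(*
  Write t = x1 + x2. For u = u_G + f(t)/2 the Hessian of u is half of diag(1/x1, 1/x2) plus
  g(t)/2 times the all-ones matrix, where g(t) = 1/(1-t) + f''(t). Hence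
  det Hess(u) = N(t) / (4 x1 x2) with N(t) = 1 + t g(t), and positivity amounts to N > 0.
  The gradient of log det Hess(u) is (N'/N - 1/x1, N'/N - 1/x2), so a critical point lies on the
  diagonal x1 = x2 = t/2 and satisfies t N'(t) = 2 N(t); cleared of denominators this reads
  Q(t) = 3t - 2 + t (1-t)^2 (t f'''(t) - f''(t)) = 0.

  Since Q(0) = -2, the zeros of Q cannot accumulate in [0,1] when f is analytic: near an
  accumulation point f, and with it Q, extends holomorphically, so Q vanishes on a neighbourhood,
  and by connectedness on all of [0,1]. On the other hand Q vanishes identically wherever f is a
  cubic plus the binary entropy -(t ln t + (1-t) ln (1-t)); cutting the entropy off by a flat bump
  function gives a smooth metric with an interval of critical points. Finally, for a prescribed
  finite set T take P vanishing exactly on T with P(0) < 0 < P(1), and a Bezout identity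
  U P + V t^3 (1-t)^2 = 1. A polynomial f with f'' = t (A + M) and M' = L P - (3t - 2) V has
  Q = P ((3t - 2) U + L t^3 (1-t)^2), and the second factor is positive on [0,1] for large L
  because it is positive at both endpoints.
*)

section \<open>The Hessian of a cohomogeneity-one potential\<close>

definition thrice_differentiable_on :: "real set \<Rightarrow> (real \<Rightarrow> real) \<Rightarrow> bool" where
  "thrice_differentiable_on S f \<longleftrightarrow> (\<forall>t\<in>S. (f has_real_derivative deriv f t) (at t) \<and>
     (deriv f has_real_derivative deriv (deriv f) t) (at t) \<and>
     (deriv (deriv f) has_real_derivative deriv (deriv (deriv f)) t) (at t))"

lemma smooth_on_imp_thrice_differentiable_on:
  assumes "smooth_on U f" "S \<subseteq> U"
  shows "thrice_differentiable_on S f"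
  unfolding thrice_differentiable_on_def
proof
  fix t assume "t \<in> S"
  then have "((deriv ^^ n) f) differentiable (at t)" for n
    using assms by (auto simp: smooth_on_def)
  from this[of 0] this[of 1] this[of 2] show "(f has_real_derivative deriv f t) (at t) \<and>
     (deriv f has_real_derivative deriv (deriv f) t) (at t) \<and>
     (deriv (deriv f) has_real_derivative deriv (deriv (deriv f)) t) (at t)"
    by (simp_all add: DERIV_deriv_iff_real_differentiable numeral_2_eq_2)
qed

lemma coh1_metric_thrice_differentiable:
  assumes "coh1_metric f"
  shows "thrice_differentiable_on {0<..<1} f"
proof -
  obtain U where "{0..1} \<subseteq> U" "smooth_on U f"
    using assms by (auto simp: coh1_metric_def)
  then show ?thesis
    by (intro smooth_on_imp_thrice_differentiable_on) auto
qed

lemma mem_intP [simp]: "(a, b) \<in> intP \<longleftrightarrow> 0 < a \<and> 0 < b \<and> a + b < 1"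
  by (simp add: intP_def)

lemma open_intP: "open intP"
  unfolding intP_def by (intro open_Collect_conj open_Collect_less continuous_intros)

lemma pd1_eqI: "((\<lambda>s. g (s, b)) has_real_derivative D) (at a) \<Longrightarrow> pd1 g (a, b) = D"
  by (simp add: pd1_def DERIV_imp_deriv)

lemma pd2_eqI: "((\<lambda>s. g (a, s)) has_real_derivative D) (at b) \<Longrightarrow> pd2 g (a, b) = D"
  by (simp add: pd2_def DERIV_imp_deriv)

lemma pd1_cong_open:
  assumes "open S" "(a, b) \<in> S" "\<And>y. y \<in> S \<Longrightarrow> g y = h y"
  shows "pd1 g (a, b) = pd1 h (a, b)"
proof -
  have "open ((\<lambda>s. (s, b)) -` S)"
    using assms(1) by (intro open_vimage continuous_intros)
  then have "eventually (\<lambda>s. (s, b) \<in> S) (nhds a)"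
    using assms(2) eventually_nhds_in_open by fastforce
  then have "eventually (\<lambda>s. g (s, b) = h (s, b)) (nhds a)"
    by eventually_elim (rule assms(3))
  then show ?thesis
    unfolding pd1_def by (auto intro: deriv_cong_ev)
qed

lemma pd2_cong_open:
  assumes "open S" "(a, b) \<in> S" "\<And>y. y \<in> S \<Longrightarrow> g y = h y"
  shows "pd2 g (a, b) = pd2 h (a, b)"
proof -
  have "open ((\<lambda>s. (a, s)) -` S)"
    using assms(1) by (intro open_vimage continuous_intros)
  then have "eventually (\<lambda>s. (a, s) \<in> S) (nhds b)"
    using assms(2) eventually_nhds_in_open by fastforce
  then have "eventually (\<lambda>s. g (a, s) = h (a, s)) (nhds b)"
    by eventually_elim (rule assms(3))
  then show ?thesis
    unfolding pd2_def by (auto intro: deriv_cong_ev)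
qed

lemma pd1_sympot:
  assumes "thrice_differentiable_on {0<..<1} f" "(a, b) \<in> intP"
  shows "pd1 (sympot f) (a, b) = (ln a - ln (1 - a - b) + deriv f (a + b)) / 2"
  using assms unfolding sympot_def uG_def Let_def thrice_differentiable_on_def
  by (intro pd1_eqI) (auto intro!: derivative_eq_intros DERIV_chain2[where f = f])

lemma pd2_sympot:
  assumes "thrice_differentiable_on {0<..<1} f" "(a, b) \<in> intP"
  shows "pd2 (sympot f) (a, b) = (ln b - ln (1 - a - b) + deriv f (a + b)) / 2"
  using assms unfolding sympot_def uG_def Let_def thrice_differentiable_on_def
  by (intro pd2_eqI) (auto intro!: derivative_eq_intros DERIV_chain2[where f = f])

definition hess_mixed :: "(real \<Rightarrow> real) \<Rightarrow> real \<Rightarrow> real" where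
  "hess_mixed f t = 1 / (1 - t) + deriv (deriv f) t"

lemma hess_sympot:
  assumes f: "thrice_differentiable_on {0<..<1} f" and x: "(a, b) \<in> intP"
  shows "hess (sympot f) (a, b) 1 1 = (1 / a + hess_mixed f (a + b)) / 2"
    and "hess (sympot f) (a, b) 1 2 = hess_mixed f (a + b) / 2"
    and "hess (sympot f) (a, b) 2 1 = hess_mixed f (a + b) / 2"
    and "hess (sympot f) (a, b) 2 2 = (1 / b + hess_mixed f (a + b)) / 2"
proof -
  let ?g1 = "\<lambda>y. (ln (fst y) - ln (1 - fst y - snd y) + deriv f (fst y + snd y)) / 2"
  let ?g2 = "\<lambda>y. (ln (snd y) - ln (1 - fst y - snd y) + deriv f (fst y + snd y)) / 2"
  have g1: "pd1 (sympot f) y = ?g1 y" and g2: "pd2 (sympot f) y = ?g2 y" if "y \<in> intP" for y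
    using that pd1_sympot[OF f, of "fst y" "snd y"] pd2_sympot[OF f, of "fst y" "snd y"] by simp_all
  have f2: "(deriv f has_real_derivative deriv (deriv f) (a + b)) (at (a + b))"
    using f x unfolding thrice_differentiable_on_def by simp
  have ne: "a \<noteq> 0" "b \<noteq> 0" "1 - a - b \<noteq> 0" "1 - (a + b) \<noteq> 0"
    using x by auto
  note derivs = derivative_eq_intros DERIV_chain2[where f = "deriv f"] f2
  have "pd1 ?g1 (a, b) = (1 / a + hess_mixed f (a + b)) / 2"
    by (rule pd1_eqI) (use x ne in \<open>auto intro!: derivs simp: hess_mixed_def\<close>)
  moreover have "pd2 ?g1 (a, b) = hess_mixed f (a + b) / 2"
    by (rule pd2_eqI) (use x ne in \<open>auto intro!: derivs simp: hess_mixed_def\<close>)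
  moreover have "pd1 ?g2 (a, b) = hess_mixed f (a + b) / 2"
    by (rule pd1_eqI) (use x ne in \<open>auto intro!: derivs simp: hess_mixed_def\<close>)
  moreover have "pd2 ?g2 (a, b) = (1 / b + hess_mixed f (a + b)) / 2"
    by (rule pd2_eqI) (use x ne in \<open>auto intro!: derivs simp: hess_mixed_def\<close>)
  ultimately show "hess (sympot f) (a, b) 1 1 = (1 / a + hess_mixed f (a + b)) / 2"
    and "hess (sympot f) (a, b) 1 2 = hess_mixed f (a + b) / 2"
    and "hess (sympot f) (a, b) 2 1 = hess_mixed f (a + b) / 2"
    and "hess (sympot f) (a, b) 2 2 = (1 / b + hess_mixed f (a + b)) / 2"
    unfolding hess_def Let_def
    using pd1_cong_open[OF open_intP x g1] pd2_cong_open[OF open_intP x g1]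
      pd1_cong_open[OF open_intP x g2] pd2_cong_open[OF open_intP x g2]
    by simp_all
qed

lemma quadratic_form_pos_iff:
  fixes a b g :: real
  assumes a: "0 < a" and b: "0 < b"
  shows "(\<forall>v1 v2. (v1, v2) \<noteq> (0, 0) \<longrightarrow> v1\<^sup>2 / a + v2\<^sup>2 / b + g * (v1 + v2)\<^sup>2 > 0)
    \<longleftrightarrow> 1 + (a + b) * g > 0"
proof
  assume "\<forall>v1 v2. (v1, v2) \<noteq> (0, 0) \<longrightarrow> v1\<^sup>2 / a + v2\<^sup>2 / b + g * (v1 + v2)\<^sup>2 > 0"
  then have "a\<^sup>2 / a + b\<^sup>2 / b + g * (a + b)\<^sup>2 > 0"
    using a by auto
  also have "a\<^sup>2 / a + b\<^sup>2 / b + g * (a + b)\<^sup>2 = (a + b) * (1 + (a + b) * g)"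
    using a b by (simp add: power2_eq_square algebra_simps)
  finally show "1 + (a + b) * g > 0"
    using a b by (simp add: zero_less_mult_iff)
next
  assume pos: "1 + (a + b) * g > 0"
  show "\<forall>v1 v2. (v1, v2) \<noteq> (0, 0) \<longrightarrow> v1\<^sup>2 / a + v2\<^sup>2 / b + g * (v1 + v2)\<^sup>2 > 0"
  proof (intro allI impI)
    fix v1 v2 :: real assume v: "(v1, v2) \<noteq> (0, 0)"
    have split: "(a + b) * (v1\<^sup>2 / a + v2\<^sup>2 / b + g * (v1 + v2)\<^sup>2)
        = (v1 + v2)\<^sup>2 * (1 + (a + b) * g) + (b * v1 - a * v2)\<^sup>2 / (a * b)"
      using a b by (simp add: field_simps power2_eq_square)
    have "(v1 + v2)\<^sup>2 * (1 + (a + b) * g) + (b * v1 - a * v2)\<^sup>2 / (a * b) > 0"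
    proof (cases "v1 + v2 = 0")
      case True
      then have "v2 = - v1"
        by simp
      with v have "v1 \<noteq> 0"
        by auto
      have "b * v1 - a * v2 = (a + b) * v1"
        using \<open>v2 = - v1\<close> by (simp add: algebra_simps)
      with \<open>v1 \<noteq> 0\<close> a b have "b * v1 - a * v2 \<noteq> 0"
        by simp
      then show ?thesis
        using True a b by simp
    next
      case False
      then show ?thesis using pos a b by (simp add: add_pos_nonneg)
    qed
    with split have "(a + b) * (v1\<^sup>2 / a + v2\<^sup>2 / b + g * (v1 + v2)\<^sup>2) > 0"
      by linarith
    then show "v1\<^sup>2 / a + v2\<^sup>2 / b + g * (v1 + v2)\<^sup>2 > 0"
      using a b by (simp add: zero_less_mult_iff)
  qed
qed

definition det_numerator :: "(real \<Rightarrow> real) \<Rightarrow> real \<Rightarrow> real" where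
  "det_numerator f t = 1 + t * hess_mixed f t"

lemma hess_posdef_sympot_iff:
  assumes f: "thrice_differentiable_on {0<..<1} f" and x: "(a, b) \<in> intP"
  shows "hess_posdef (sympot f) (a, b) \<longleftrightarrow> det_numerator f (a + b) > 0"
proof -
  have form: "v1 * (hess (sympot f) (a, b) 1 1 * v1 + hess (sympot f) (a, b) 1 2 * v2)
      + v2 * (hess (sympot f) (a, b) 2 1 * v1 + hess (sympot f) (a, b) 2 2 * v2)
      = (v1\<^sup>2 / a + v2\<^sup>2 / b + hess_mixed f (a + b) * (v1 + v2)\<^sup>2) / 2" for v1 v2
    unfolding hess_sympot[OF f x] by (simp add: field_simps power2_eq_square)
  have "hess_posdef (sympot f) (a, b) \<longleftrightarrow>
      (\<forall>v1 v2. (v1, v2) \<noteq> (0, 0) \<longrightarrow> v1\<^sup>2 / a + v2\<^sup>2 / b + hess_mixed f (a + b) * (v1 + v2)\<^sup>2 > 0)"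
    unfolding hess_posdef_def form by simp
  also have "\<dots> \<longleftrightarrow> det_numerator f (a + b) > 0"
    using quadratic_form_pos_iff x by (simp add: det_numerator_def)
  finally show ?thesis .
qed

lemma hess_det_sympot:
  assumes f: "thrice_differentiable_on {0<..<1} f" and x: "(a, b) \<in> intP"
  shows "hess_det (sympot f) (a, b) = det_numerator f (a + b) / (4 * a * b)"
  using x unfolding hess_det_def hess_sympot[OF f x] det_numerator_def
  by (simp add: field_simps)

lemma coh1_metric_det_numerator_pos:
  assumes "coh1_metric f" "0 < t" "t < 1"
  shows "det_numerator f t > 0"
proof -
  have t: "(t / 2, t / 2) \<in> intP"
    using assms(2,3) by simp
  with assms(1) have "hess_posdef (sympot f) (t / 2, t / 2)"
    unfolding coh1_metric_def by blast
  then show ?thesis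
    using hess_posdef_sympot_iff[OF coh1_metric_thrice_differentiable[OF assms(1)] t] by simp
qed

lemma coh1_metricI:
  assumes "open U" "{0..1} \<subseteq> U" "smooth_on U f"
    and pos: "\<And>t. 0 < t \<Longrightarrow> t < 1 \<Longrightarrow> deriv (deriv f) t > - 1 / (t * (1 - t))"
  shows "coh1_metric f"
proof -
  have f: "thrice_differentiable_on {0<..<1} f"
    using assms(2,3) by (intro smooth_on_imp_thrice_differentiable_on) auto
  have "hess_posdef (sympot f) (a, b)" if ab: "(a, b) \<in> intP" for a b
  proof -
    define t where "t = a + b"
    have t: "0 < t" "t < 1"
      using ab by (auto simp: t_def)
    have "t * (- 1 / (t * (1 - t))) < t * deriv (deriv f) t"
      using pos[OF t] t by (intro mult_strict_left_mono) auto
    moreover have "t * (- 1 / (t * (1 - t))) = - 1 / (1 - t)" "1 + t / (1 - t) = 1 / (1 - t)"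
      using t by (simp_all add: field_simps)
    ultimately have "det_numerator f t > 0"
      unfolding det_numerator_def hess_mixed_def by (simp add: algebra_simps)
    then show ?thesis
      using hess_posdef_sympot_iff[OF f ab] by (simp add: t_def)
  qed
  then show ?thesis
    unfolding coh1_metric_def using assms(1-3) by auto
qed

section \<open>Critical points of the orbital volume\<close>

lemma has_derivative_powr_zero_iff:
  fixes q :: "'a::real_normed_vector \<Rightarrow> real"
  assumes q: "(q has_derivative q') (at x)" and pos: "q x > 0" and e: "e \<noteq> 0"
  shows "((\<lambda>y. q y powr e) has_derivative (\<lambda>_. 0)) (at x) \<longleftrightarrow> q' = (\<lambda>_. 0)"
proof -
  have "((\<lambda>y. q y powr e) has_derivative (\<lambda>h. q x powr e * (q' h * e / q x))) (at x)"
    using has_derivative_powr[OF q has_derivative_const pos] by simp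
  moreover have "(\<lambda>h. q x powr e * (q' h * e / q x)) = (\<lambda>_. 0) \<longleftrightarrow> q' = (\<lambda>_. 0)"
    using pos e by (auto simp: fun_eq_iff)
  ultimately show ?thesis
    using has_derivative_unique by metis
qed

lemma has_derivative_sum_div_prod:
  assumes N: "(N has_real_derivative N') (at (a + b))" and "a \<noteq> 0" "b \<noteq> 0"
  shows "((\<lambda>y. N (fst y + snd y) / (4 * fst y * snd y)) has_derivative
      (\<lambda>h. (fst h * (N' - N (a + b) / a) + snd h * (N' - N (a + b) / b)) / (4 * a * b))) (at (a, b))"
proof -
  have "((\<lambda>y. fst y + snd y) has_derivative (\<lambda>h. fst h + snd h)) (at (a, b))"
    by (auto intro!: derivative_eq_intros)
  from DERIV_compose_FDERIV[OF _ this] N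
  have "((\<lambda>y. N (fst y + snd y)) has_derivative (\<lambda>h. (fst h + snd h) * N')) (at (a, b))"
    by simp
  moreover have "((\<lambda>y. 4 * fst y * snd y) has_derivative (\<lambda>h. 4 * (fst h * b + a * snd h))) (at (a, b))"
    by (auto intro!: derivative_eq_intros simp: algebra_simps)
  ultimately show ?thesis
    using assms(2,3)
    by (auto intro!: has_derivative_eq_rhs[OF has_derivative_divide'] simp: fun_eq_iff field_simps)
qed

lemma sum_div_prod_derivative_eq_0_iff:
  fixes a b N N' :: real
  assumes a: "0 < a" and b: "0 < b" and N: "N \<noteq> 0"
  shows "(\<lambda>h::real \<times> real. (fst h * (N' - N / a) + snd h * (N' - N / b)) / (4 * a * b)) = (\<lambda>_. 0)
    \<longleftrightarrow> a = b \<and> (a + b) * N' = 2 * N"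
proof
  assume L: "(\<lambda>h::real \<times> real. (fst h * (N' - N / a) + snd h * (N' - N / b)) / (4 * a * b)) = (\<lambda>_. 0)"
  from fun_cong[OF L, of "(1, 0)"] fun_cong[OF L, of "(0, 1)"]
  have "a * N' = N" "b * N' = N"
    using a b by (auto simp: field_simps)
  with N show "a = b \<and> (a + b) * N' = 2 * N"
    by (auto simp: algebra_simps)
next
  assume "a = b \<and> (a + b) * N' = 2 * N"
  then have "b = a" "N' = N / a"
    using a by (auto simp: field_simps)
  then show "(\<lambda>h::real \<times> real. (fst h * (N' - N / a) + snd h * (N' - N / b)) / (4 * a * b)) = (\<lambda>_. 0)"
    by simp
qed

lemma det_numerator_has_derivative:
  assumes "thrice_differentiable_on {0<..<1} f" "0 < t" "t < 1"
  shows "(det_numerator f has_real_derivative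
      1 / (1 - t)\<^sup>2 + deriv (deriv f) t + t * deriv (deriv (deriv f)) t) (at t)"
proof -
  have "(deriv (deriv f) has_real_derivative deriv (deriv (deriv f)) t) (at t)"
    using assms by (simp add: thrice_differentiable_on_def)
  then show ?thesis
    unfolding det_numerator_def[abs_def] hess_mixed_def using assms(3)
    by (auto intro!: derivative_eq_intros simp: field_simps power2_eq_square)
qed

definition crit_eqn :: "(real \<Rightarrow> real) \<Rightarrow> real \<Rightarrow> real" where
  "crit_eqn f t = 3 * t - 2 + t * (1 - t)\<^sup>2 * (t * deriv (deriv (deriv f)) t - deriv (deriv f) t)"

lemma crit_eqn_iff:
  assumes "t < 1"
  shows "t * (1 / (1 - t)\<^sup>2 + deriv (deriv f) t + t * deriv (deriv (deriv f)) t) = 2 * det_numerator f t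
    \<longleftrightarrow> crit_eqn f t = 0"
proof -
  define u where "u = 1 / (1 - t)"
  have u: "u * (1 - t) = 1"
    using assms by (simp add: u_def)
  have u2: "1 / (1 - t)\<^sup>2 = u\<^sup>2"
    by (simp add: u_def power_one_over)
  have "(1 - t)\<^sup>2 * (t * (1 / (1 - t)\<^sup>2 + deriv (deriv f) t + t * deriv (deriv (deriv f)) t)
      - 2 * det_numerator f t) = crit_eqn f t"
    unfolding det_numerator_def hess_mixed_def crit_eqn_def u2 u_def[symmetric]
    using u by algebra
  then show ?thesis
    using assms by auto
qed

lemma minimal_fibre_iff:
  assumes "coh1_metric f"
  shows "minimal_fibre f (a, b) \<longleftrightarrow> (a, b) \<in> intP \<and> a = b \<and> crit_eqn f (a + b) = 0"
proof (cases "(a, b) \<in> intP")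
  case False
  then show ?thesis
    unfolding minimal_fibre_def by blast
next
  case x: True
  have f: "thrice_differentiable_on {0<..<1} f"
    using assms by (rule coh1_metric_thrice_differentiable)
  define q where "q y = det_numerator f (fst y + snd y) / (4 * fst y * snd y)" for y :: "real \<times> real"
  define N' where "N' = 1 / (1 - (a + b))\<^sup>2 + deriv (deriv f) (a + b) + (a + b) * deriv (deriv (deriv f)) (a + b)"
  let ?N = "det_numerator f (a + b)"
  have N: "(det_numerator f has_real_derivative N') (at (a + b))"
    unfolding N'_def using x by (intro det_numerator_has_derivative f) auto
  have Npos: "?N > 0"
    using x by (intro coh1_metric_det_numerator_pos assms) auto
  have q: "(q has_derivative (\<lambda>h. (fst h * (N' - ?N / a) + snd h * (N' - ?N / b)) / (4 * a * b))) (at (a, b))"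
    unfolding q_def using has_derivative_sum_div_prod[OF N] x by simp
  have qpos: "q (a, b) > 0"
    using x Npos by (simp add: q_def)
  have "hess_det (sympot f) y powr (-1/2) = q y powr (-1/2)" if "y \<in> intP" for y
    using hess_det_sympot[OF f, of "fst y" "snd y"] that by (simp add: q_def)
  then have "minimal_fibre f (a, b) \<longleftrightarrow> ((\<lambda>y. q y powr (-1/2)) has_derivative (\<lambda>_. 0)) (at (a, b))"
    unfolding minimal_fibre_def orbital_volume_def using x
    by (auto elim!: has_derivative_transform_within_open[OF _ open_intP x])
  also have "\<dots> \<longleftrightarrow> (\<lambda>h. (fst h * (N' - ?N / a) + snd h * (N' - ?N / b)) / (4 * a * b)) = (\<lambda>_. 0)"
    using has_derivative_powr_zero_iff[OF q qpos] by simp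
  also have "\<dots> \<longleftrightarrow> a = b \<and> (a + b) * N' = 2 * ?N"
    using x Npos by (intro sum_div_prod_derivative_eq_0_iff) auto
  also have "\<dots> \<longleftrightarrow> a = b \<and> crit_eqn f (a + b) = 0"
    using crit_eqn_iff[of "a + b" f] x by (simp add: N'_def)
  finally show ?thesis
    using x by blast
qed

lemma minimal_fibres_eq:
  assumes "coh1_metric f"
  shows "{x. minimal_fibre f x} = (\<lambda>t. (t / 2, t / 2)) ` {t \<in> {0<..<1}. crit_eqn f t = 0}"
proof (intro equalityI subsetI)
  fix x assume "x \<in> {x. minimal_fibre f x}"
  moreover obtain a b where x: "x = (a, b)"
    by fastforce
  ultimately have "(a, b) \<in> intP" "a = b" "crit_eqn f (a + b) = 0"
    using minimal_fibre_iff[OF assms] by auto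
  then show "x \<in> (\<lambda>t. (t / 2, t / 2)) ` {t \<in> {0<..<1}. crit_eqn f t = 0}"
    unfolding x by (intro image_eqI[of _ _ "a + b"]) auto
next
  fix x assume "x \<in> (\<lambda>t. (t / 2, t / 2)) ` {t \<in> {0<..<1}. crit_eqn f t = 0}"
  then obtain t where "x = (t / 2, t / 2)" "0 < t" "t < 1" "crit_eqn f t = 0"
    by auto
  then show "x \<in> {x. minimal_fibre f x}"
    using minimal_fibre_iff[OF assms] by simp
qed

lemma crit_eqn_eqI:
  assumes S: "open S" "t \<in> S" and eq: "\<And>s. s \<in> S \<Longrightarrow> f s = g s"
    and g': "\<And>s. s \<in> S \<Longrightarrow> (g has_real_derivative g' s) (at s)"
    and g'': "\<And>s. s \<in> S \<Longrightarrow> (g' has_real_derivative g'' s) (at s)"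
    and g''': "\<And>s. s \<in> S \<Longrightarrow> (g'' has_real_derivative g''' s) (at s)"
  shows "crit_eqn f t = 3 * t - 2 + t * (1 - t)\<^sup>2 * (t * g''' t - g'' t)"
proof -
  have deriv_eq: "deriv h s = h' s"
    if "\<And>s. s \<in> S \<Longrightarrow> h s = k s" "\<And>s. s \<in> S \<Longrightarrow> (k has_real_derivative h' s) (at s)" "s \<in> S"
    for h k h' s
    using has_field_derivative_transform_within_open[OF that(2)[OF that(3)] S(1) that(3)] that(1)
    by (auto intro: DERIV_imp_deriv)
  have "deriv f s = g' s" if "s \<in> S" for s
    using deriv_eq[OF eq g' that] .
  then have f'': "deriv (deriv f) s = g'' s" if "s \<in> S" for s
    using deriv_eq[OF _ g'' that] by blast
  then have "deriv (deriv (deriv f)) t = g''' t"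
    using deriv_eq[OF _ g''' S(2)] by blast
  with f''[OF S(2)] show ?thesis
    by (simp add: crit_eqn_def)
qed

section \<open>Analytic metrics\<close>

lemma real_power_series_holomorphic_extension:
  fixes a :: "nat \<Rightarrow> real"
  assumes ser: "\<And>t. \<bar>t - c\<bar> < r \<Longrightarrow> (\<lambda>n. a n * (t - c) ^ n) sums f t"
  obtains F where "F holomorphic_on ball (of_real c) r"
    and "\<And>t. \<bar>t - c\<bar> < r \<Longrightarrow> F (of_real t) = of_real (f t)"
proof
  define F where "F z = (\<Sum>n. of_real (a n) * (z - of_real c) ^ n)" for z :: complex
  have sums: "(\<lambda>n. of_real (a n) * (z - of_real c) ^ n) sums F z" if "z \<in> ball (of_real c) r" for z
  proof -
    define m where "m = norm (z - of_real c)"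
    define \<rho> where "\<rho> = (m + r) / 2"
    have "0 \<le> m" "m < r"
      using that by (simp_all add: m_def dist_norm norm_minus_commute)
    then have \<rho>: "norm (z - of_real c) < \<rho>" "\<bar>(c + \<rho>) - c\<bar> < r"
      unfolding \<rho>_def m_def[symmetric] by (auto simp: abs_if)
    have "summable (\<lambda>n. a n * \<rho> ^ n)"
      using sums_summable[OF ser[OF \<rho>(2)]] by simp
    then have "summable (\<lambda>n. of_real (a n) * (of_real \<rho> :: complex) ^ n)"
      using summable_complex_of_real[of "\<lambda>n. a n * \<rho> ^ n"] by simp
    from powser_inside[OF this] \<rho>(1) show ?thesis
      unfolding F_def by (auto intro: summable_sums)
  qed
  show "F holomorphic_on ball (of_real c) r"
    by (rule power_series_holomorphic[where a = "\<lambda>n. of_real (a n)"]) (rule sums)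
  show "F (of_real t) = of_real (f t)" if "\<bar>t - c\<bar> < r" for t
  proof -
    have "(\<lambda>n. complex_of_real (a n * (t - c) ^ n)) sums of_real (f t)"
      using ser[OF that] by (simp only: sums_of_real_iff)
    moreover have "of_real t \<in> ball (of_real c :: complex) r"
      using that by (simp add: dist_norm abs_minus_commute flip: of_real_diff)
    then have "(\<lambda>n. complex_of_real (a n * (t - c) ^ n)) sums F (of_real t)"
      using sums by simp
    ultimately show ?thesis
      by (rule sums_unique2[symmetric])
  qed
qed

lemma holomorphic_extension_deriv:
  fixes G :: "complex \<Rightarrow> complex" and g :: "real \<Rightarrow> real"
  assumes hol: "G holomorphic_on ball (of_real c) r"
    and eq: "\<And>t. \<bar>t - c\<bar> < r \<Longrightarrow> G (of_real t) = of_real (g t)"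
    and t: "\<bar>t - c\<bar> < r"
  shows "deriv G (of_real t) = of_real (deriv g t)"
proof -
  let ?G' = "deriv G (of_real t)"
  have "of_real t \<in> ball (of_real c :: complex) r"
    using t by (simp add: dist_norm abs_minus_commute flip: of_real_diff)
  then have "((\<lambda>s. G (of_real s)) has_vector_derivative ?G') (at t)"
    using has_vector_derivative_real_field holomorphic_derivI[OF hol open_ball] by blast
  moreover have "open {s. \<bar>s - c\<bar> < r}"
    by (intro open_Collect_less continuous_intros)
  ultimately have v: "((\<lambda>s. complex_of_real (g s)) has_vector_derivative ?G') (at t)"
    unfolding has_vector_derivative_def
    by (rule has_derivative_transform_within_open) (use t eq in auto)
  have "((\<lambda>s. Re (complex_of_real (g s))) has_derivative (\<lambda>h. Re (h *\<^sub>R ?G'))) (at t)"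
    using bounded_linear.has_derivative[OF bounded_linear_Re v[unfolded has_vector_derivative_def]] .
  then have "(g has_derivative (\<lambda>h. Re ?G' * h)) (at t)"
    by (simp add: mult.commute)
  then have d: "(g has_real_derivative Re ?G') (at t)"
    by (simp add: has_field_derivative_def)
  have "?G' = of_real (Re ?G')"
    using vector_derivative_unique_at[OF v has_vector_derivative_of_real[OF d]] .
  with DERIV_imp_deriv[OF d] show ?thesis
    by simp
qed

lemma crit_eqn_holomorphic_extension:
  fixes a :: "nat \<Rightarrow> real"
  assumes "\<And>t. \<bar>t - c\<bar> < r \<Longrightarrow> (\<lambda>n. a n * (t - c) ^ n) sums f t"
  obtains H where "H holomorphic_on ball (of_real c) r"
    and "\<And>t. \<bar>t - c\<bar> < r \<Longrightarrow> H (of_real t) = of_real (crit_eqn f t)"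
proof -
  obtain F where hol: "F holomorphic_on ball (of_real c) r"
    and F: "\<And>t. \<bar>t - c\<bar> < r \<Longrightarrow> F (of_real t) = of_real (f t)"
    using real_power_series_holomorphic_extension[OF assms] by blast
  define F2 where "F2 = deriv (deriv F)"
  define F3 where "F3 = deriv F2"
  have hol2: "F2 holomorphic_on ball (of_real c) r"
    unfolding F2_def by (intro holomorphic_deriv hol open_ball)
  have hol3: "F3 holomorphic_on ball (of_real c) r"
    unfolding F3_def by (intro holomorphic_deriv hol2 open_ball)
  have F1: "deriv F (of_real s) = of_real (deriv f s)" if "\<bar>s - c\<bar> < r" for s
    using holomorphic_extension_deriv[OF hol F that] .
  have F2: "F2 (of_real s) = of_real (deriv (deriv f) s)" if "\<bar>s - c\<bar> < r" for s
    unfolding F2_def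
    using holomorphic_extension_deriv[OF holomorphic_deriv[OF hol open_ball] F1 that] .
  have F3: "F3 (of_real s) = of_real (deriv (deriv (deriv f)) s)" if "\<bar>s - c\<bar> < r" for s
    unfolding F3_def using holomorphic_extension_deriv[OF hol2 F2 that] .
  show ?thesis
  proof
    show "(\<lambda>z. 3 * z - 2 + z * (1 - z)\<^sup>2 * (z * F3 z - F2 z)) holomorphic_on ball (of_real c) r"
      by (intro holomorphic_intros hol2 hol3)
    show "3 * of_real t - 2 + of_real t * (1 - of_real t)\<^sup>2 * (of_real t * F3 (of_real t) - F2 (of_real t))
        = complex_of_real (crit_eqn f t)" if "\<bar>t - c\<bar> < r" for t
      using F2[OF that] F3[OF that] by (simp add: crit_eqn_def)
  qed
qed

lemma crit_eqn_vanishes_near_limit_point: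
  fixes a :: "nat \<Rightarrow> real"
  assumes r: "r > 0" and ser: "\<And>t. \<bar>t - c\<bar> < r \<Longrightarrow> (\<lambda>n. a n * (t - c) ^ n) sums f t"
    and lim: "c islimpt {t. crit_eqn f t = 0}"
    and t: "\<bar>t - c\<bar> < r"
  shows "crit_eqn f t = 0"
proof -
  obtain H where holH: "H holomorphic_on ball (of_real c) r"
    and H: "\<And>s. \<bar>s - c\<bar> < r \<Longrightarrow> H (of_real s) = of_real (crit_eqn f s)"
    using crit_eqn_holomorphic_extension[OF ser] by blast
  let ?Z = "complex_of_real ` {s. \<bar>s - c\<bar> < r \<and> crit_eqn f s = 0}"
  have "of_real c islimpt ?Z"
    unfolding islimpt_approachable
  proof (intro allI impI)
    fix e :: real assume "e > 0"
    with r have "min e r > 0"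
      by simp
    with lim obtain s where "crit_eqn f s = 0" "s \<noteq> c" "dist s c < min e r"
      unfolding islimpt_approachable by blast
    then show "\<exists>z\<in>?Z. z \<noteq> of_real c \<and> dist z (of_real c) < e"
      by (intro bexI[of _ "of_real s"]) (auto simp: dist_real_def)
  qed
  moreover have "?Z \<subseteq> ball (of_real c) r" "of_real t \<in> ball (of_real c :: complex) r"
    using t by (auto simp: dist_norm abs_minus_commute simp flip: of_real_diff)
  moreover have "of_real c \<in> ball (of_real c :: complex) r"
    using r by simp
  moreover have "H z = 0" if "z \<in> ?Z" for z
    using that H by auto
  ultimately have "H (of_real t) = 0"
    using analytic_continuation[OF holH open_ball connected_ball] by metis
  with H[OF t] show ?thesis
    by simp
qed

lemma finite_if_limit_points_interior:
  fixes Z :: "real set"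
  assumes lim: "\<And>c. c \<in> {a..b} \<Longrightarrow> c islimpt Z \<Longrightarrow> c \<in> interior Z" and "a \<notin> Z"
  shows "finite (Z \<inter> {a..b})"
proof (rule ccontr)
  assume "infinite (Z \<inter> {a..b})"
  then obtain c where c: "c \<in> {a..b}" "c islimpt (Z \<inter> {a..b})"
    using compact_Icc[of a b] unfolding compact_eq_Bolzano_Weierstrass by blast
  define T where "T = {a..b} \<inter> interior Z"
  have "c \<in> T"
    using c lim islimpt_subset[OF c(2)] by (auto simp: T_def)
  moreover have "openin (top_of_set {a..b}) T"
    unfolding T_def by (rule openin_open_Int) simp
  moreover have "closedin (top_of_set {a..b}) T"
    unfolding closedin_limpt
  proof (intro conjI allI impI)
    show "T \<subseteq> {a..b}"
      by (auto simp: T_def)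
    fix x assume "x islimpt T \<and> x \<in> {a..b}"
    moreover have "T \<subseteq> Z"
      using interior_subset by (auto simp: T_def)
    ultimately show "x \<in> T"
      using lim[of x] islimpt_subset[of x T Z] by (simp add: T_def)
  qed
  ultimately have "T = {a..b}"
    using connected_Icc[of a b] unfolding connected_clopen by blast
  then have "a \<in> Z"
    using c interior_subset by (fastforce simp: T_def)
  with assms(2) show False ..
qed

lemma analytic_crit_eqn_zeros_finite:
  assumes "analytic_metric f"
  shows "finite {t \<in> {0<..<1}. crit_eqn f t = 0}"
proof -
  obtain U where U: "{0..1} \<subseteq> U" "real_analytic_on U f"
    using assms by (auto simp: analytic_metric_def)
  let ?Z = "{t. crit_eqn f t = 0}"
  have "c \<in> interior ?Z" if "c \<in> {0..1}" "c islimpt ?Z" for c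
  proof -
    have "c \<in> U"
      using U(1) that(1) by blast
    with U(2) obtain r a where r: "r > 0" "\<forall>t. \<bar>t - c\<bar> < r \<longrightarrow> (\<lambda>n. a n * (t - c) ^ n) sums f t"
      unfolding real_analytic_on_def by blast
    have "ball c r \<subseteq> ?Z"
    proof
      fix t assume "t \<in> ball c r"
      then have "\<bar>t - c\<bar> < r"
        by (simp add: dist_real_def abs_minus_commute)
      then show "t \<in> ?Z"
        using crit_eqn_vanishes_near_limit_point[OF r(1) r(2)[rule_format] that(2)] by simp
    qed
    then show ?thesis
      using \<open>r > 0\<close> interior_maximal by (meson centre_in_ball open_ball subsetD)
  qed
  moreover have "0 \<notin> ?Z"
    by (simp add: crit_eqn_def)
  ultimately have "finite (?Z \<inter> {0..1})"
    by (rule finite_if_limit_points_interior)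
  then show ?thesis
    by (rule finite_subset[rotated]) auto
qed

lemma analytic_minimal_fibres_finite:
  assumes "coh1_metric f" "analytic_metric f"
  shows "finite {x. minimal_fibre f x}"
  unfolding minimal_fibres_eq[OF assms(1)] using analytic_crit_eqn_zeros_finite[OF assms(2)] by simp

section \<open>Infinitely differentiable functions\<close>

coinductive infinitely_differentiable_on :: "real set \<Rightarrow> (real \<Rightarrow> real) \<Rightarrow> bool" for S where
  "infinitely_differentiable_on S g' \<Longrightarrow> \<forall>t\<in>S. (g has_real_derivative g' t) (at t)
    \<Longrightarrow> infinitely_differentiable_on S g"

lemma infinitely_differentiable_onE:
  assumes "infinitely_differentiable_on S g"
  obtains g' where "infinitely_differentiable_on S g'"
    and "\<And>t. t \<in> S \<Longrightarrow> (g has_real_derivative g' t) (at t)"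
  using assms by (cases rule: infinitely_differentiable_on.cases) (use that in blast)

lemma infinitely_differentiable_on_cong:
  assumes "open S" "infinitely_differentiable_on S g" "\<And>t. t \<in> S \<Longrightarrow> f t = g t"
  shows "infinitely_differentiable_on S f"
proof -
  obtain g' where g': "infinitely_differentiable_on S g'"
    "\<And>t. t \<in> S \<Longrightarrow> (g has_real_derivative g' t) (at t)"
    using assms(2) by (rule infinitely_differentiable_onE) blast
  have "(f has_real_derivative g' t) (at t)" if "t \<in> S" for t
    using has_field_derivative_transform_within_open[OF g'(2) assms(1)] that assms(3) by simp
  with g'(1) show ?thesis
    by (blast intro: infinitely_differentiable_on.intros)
qed

lemma infinitely_differentiable_on_imp_smooth_on:
  assumes S: "open S" and g: "infinitely_differentiable_on S g"
  shows "smooth_on S g"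
proof -
  have higher: "\<exists>h. infinitely_differentiable_on S h \<and> (\<forall>t\<in>S. (deriv ^^ n) g t = h t)" for n
  proof (induction n)
    case 0
    then show ?case
      using g by auto
  next
    case (Suc n)
    then obtain h where h: "infinitely_differentiable_on S h" "\<And>t. t \<in> S \<Longrightarrow> (deriv ^^ n) g t = h t"
      by blast
    obtain h' where h': "infinitely_differentiable_on S h'"
      "\<And>t. t \<in> S \<Longrightarrow> (h has_real_derivative h' t) (at t)"
      using h(1) by (rule infinitely_differentiable_onE) blast
    have "(deriv ^^ Suc n) g t = h' t" if "t \<in> S" for t
      using has_field_derivative_transform_within_open[OF h'(2)[OF that] S that] h(2)
      by (simp add: DERIV_imp_deriv)
    with h'(1) show ?case
      by blast
  qed
  show ?thesis
    unfolding smooth_on_def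
  proof (intro allI ballI)
    fix n t assume t: "t \<in> S"
    obtain h where h: "infinitely_differentiable_on S h" "\<And>t. t \<in> S \<Longrightarrow> (deriv ^^ n) g t = h t"
      using higher by blast
    obtain h' where "\<And>t. t \<in> S \<Longrightarrow> (h has_real_derivative h' t) (at t)"
      using h(1) by (rule infinitely_differentiable_onE) blast
    then have "((deriv ^^ n) g has_real_derivative h' t) (at t)"
      by (rule has_field_derivative_transform_within_open[OF _ S t]) (simp_all add: h(2) t)
    then show "(deriv ^^ n) g differentiable (at t)"
      using real_differentiable_def by blast
  qed
qed

lemma infinitely_differentiable_on_const: "infinitely_differentiable_on S (\<lambda>t. c)"
proof -
  have "\<exists>c. h = (\<lambda>t. c) \<Longrightarrow> infinitely_differentiable_on S h" for h
  proof (coinduction arbitrary: h)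
    case infinitely_differentiable_on
    then show ?case
      by (intro exI[of _ "\<lambda>_. 0"] exI[of _ h] conjI disjI1) auto
  qed
  then show ?thesis
    by blast
qed

lemma infinitely_differentiable_on_ident: "infinitely_differentiable_on S (\<lambda>t. t)"
  by (rule infinitely_differentiable_on.intros[OF infinitely_differentiable_on_const[of S 1]]) auto

inductive_set sums_of_products :: "real set \<Rightarrow> (real \<Rightarrow> real) set" for S where
  "infinitely_differentiable_on S a \<Longrightarrow> infinitely_differentiable_on S b
    \<Longrightarrow> (\<lambda>t. a t * b t) \<in> sums_of_products S"
| "h1 \<in> sums_of_products S \<Longrightarrow> h2 \<in> sums_of_products S
    \<Longrightarrow> (\<lambda>t. h1 t + h2 t) \<in> sums_of_products S"

lemma sums_of_products_has_derivative:
  "h \<in> sums_of_products S \<Longrightarrow> \<exists>h'\<in>sums_of_products S. \<forall>t\<in>S. (h has_real_derivative h' t) (at t)"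
proof (induction rule: sums_of_products.induct)
  case (1 a b)
  obtain a' where a': "infinitely_differentiable_on S a'"
    "\<And>t. t \<in> S \<Longrightarrow> (a has_real_derivative a' t) (at t)"
    using 1(1) by (rule infinitely_differentiable_onE) blast
  obtain b' where b': "infinitely_differentiable_on S b'"
    "\<And>t. t \<in> S \<Longrightarrow> (b has_real_derivative b' t) (at t)"
    using 1(2) by (rule infinitely_differentiable_onE) blast
  have "(\<lambda>t. a' t * b t + a t * b' t) \<in> sums_of_products S"
    using 1 a' b' by (intro sums_of_products.intros)
  moreover have "\<forall>t\<in>S. ((\<lambda>t. a t * b t) has_real_derivative a' t * b t + a t * b' t) (at t)"
    using a'(2) b'(2) by (auto intro!: derivative_eq_intros)
  ultimately show ?case
    by (rule bexI[rotated, where x = "\<lambda>t. a' t * b t + a t * b' t"])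
next
  case (2 h1 h2)
  then obtain h1' h2' where "h1' \<in> sums_of_products S" "\<forall>t\<in>S. (h1 has_real_derivative h1' t) (at t)"
    "h2' \<in> sums_of_products S" "\<forall>t\<in>S. (h2 has_real_derivative h2' t) (at t)"
    by blast
  then show ?case
    by (intro bexI[of _ "\<lambda>t. h1' t + h2' t"] sums_of_products.intros(2)) (auto intro!: derivative_intros)
qed

lemma infinitely_differentiable_on_sums_of_products:
  "h \<in> sums_of_products S \<Longrightarrow> infinitely_differentiable_on S h"
proof (coinduction arbitrary: h)
  case infinitely_differentiable_on
  then show ?case
    using sums_of_products_has_derivative by blast
qed

lemma infinitely_differentiable_on_mult:
  "infinitely_differentiable_on S f \<Longrightarrow> infinitely_differentiable_on S g
    \<Longrightarrow> infinitely_differentiable_on S (\<lambda>t. f t * g t)"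
  by (rule infinitely_differentiable_on_sums_of_products, rule sums_of_products.intros(1))

lemma infinitely_differentiable_on_add:
  assumes "infinitely_differentiable_on S f" "infinitely_differentiable_on S g"
  shows "infinitely_differentiable_on S (\<lambda>t. f t + g t)"
proof -
  have "(\<lambda>t. f t * 1 + g t * 1) \<in> sums_of_products S"
    using assms infinitely_differentiable_on_const
    by (intro sums_of_products.intros)
  then show ?thesis
    using infinitely_differentiable_on_sums_of_products by simp
qed

inductive_set sums_of_composites ::
  "real set \<Rightarrow> real set \<Rightarrow> (real \<Rightarrow> real) \<Rightarrow> (real \<Rightarrow> real) set" for S T g where
  "infinitely_differentiable_on T H \<Longrightarrow> infinitely_differentiable_on S k
    \<Longrightarrow> (\<lambda>t. H (g t) * k t) \<in> sums_of_composites S T g"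
| "h1 \<in> sums_of_composites S T g \<Longrightarrow> h2 \<in> sums_of_composites S T g
    \<Longrightarrow> (\<lambda>t. h1 t + h2 t) \<in> sums_of_composites S T g"

lemma sums_of_composites_has_derivative:
  assumes g: "infinitely_differentiable_on S g" and gT: "\<And>t. t \<in> S \<Longrightarrow> g t \<in> T"
  shows "h \<in> sums_of_composites S T g
    \<Longrightarrow> \<exists>h'\<in>sums_of_composites S T g. \<forall>t\<in>S. (h has_real_derivative h' t) (at t)"
proof (induction rule: sums_of_composites.induct)
  case (1 H k)
  obtain H' where H': "infinitely_differentiable_on T H'"
    "\<And>t. t \<in> T \<Longrightarrow> (H has_real_derivative H' t) (at t)"
    using 1(1) by (rule infinitely_differentiable_onE) blast
  obtain k' where k': "infinitely_differentiable_on S k'"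
    "\<And>t. t \<in> S \<Longrightarrow> (k has_real_derivative k' t) (at t)"
    using 1(2) by (rule infinitely_differentiable_onE) blast
  obtain g' where g': "infinitely_differentiable_on S g'"
    "\<And>t. t \<in> S \<Longrightarrow> (g has_real_derivative g' t) (at t)"
    using g by (rule infinitely_differentiable_onE) blast
  have "(\<lambda>t. H' (g t) * (g' t * k t) + H (g t) * k' t) \<in> sums_of_composites S T g"
    using 1 H' k' g'
    by (intro sums_of_composites.intros infinitely_differentiable_on_mult)
  moreover have "\<forall>t\<in>S. ((\<lambda>t. H (g t) * k t) has_real_derivative H' (g t) * (g' t * k t) + H (g t) * k' t) (at t)"
  proof
    fix t assume t: "t \<in> S"
    show "((\<lambda>t. H (g t) * k t) has_real_derivative H' (g t) * (g' t * k t) + H (g t) * k' t) (at t)"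
      using DERIV_chain2[OF H'(2)[OF gT[OF t]] g'(2)[OF t]] k'(2)[OF t]
      by (auto intro!: derivative_eq_intros simp: algebra_simps)
  qed
  ultimately show ?case
    by (rule bexI[rotated, where x = "\<lambda>t. H' (g t) * (g' t * k t) + H (g t) * k' t"])
next
  case (2 h1 h2)
  then obtain h1' h2' where "h1' \<in> sums_of_composites S T g" "\<forall>t\<in>S. (h1 has_real_derivative h1' t) (at t)"
    "h2' \<in> sums_of_composites S T g" "\<forall>t\<in>S. (h2 has_real_derivative h2' t) (at t)"
    by blast
  then show ?case
    by (intro bexI[of _ "\<lambda>t. h1' t + h2' t"] sums_of_composites.intros(2)) (auto intro!: derivative_intros)
qed

lemma infinitely_differentiable_on_compose:
  assumes F: "infinitely_differentiable_on T F" and g: "infinitely_differentiable_on S g"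
    and gT: "\<And>t. t \<in> S \<Longrightarrow> g t \<in> T"
  shows "infinitely_differentiable_on S (\<lambda>t. F (g t))"
proof -
  have "h \<in> sums_of_composites S T g \<Longrightarrow> infinitely_differentiable_on S h" for h
  proof (coinduction arbitrary: h)
    case infinitely_differentiable_on
    then show ?case
      using sums_of_composites_has_derivative[OF g gT] by blast
  qed
  moreover have "(\<lambda>t. F (g t) * 1) \<in> sums_of_composites S T g"
    using F infinitely_differentiable_on_const by (rule sums_of_composites.intros)
  ultimately show ?thesis
    by simp
qed

lemma infinitely_differentiable_on_affine: "infinitely_differentiable_on S (\<lambda>t. a * t + b)"
  by (intro infinitely_differentiable_on_add infinitely_differentiable_on_mult
      infinitely_differentiable_on_const infinitely_differentiable_on_ident)

lemma infinitely_differentiable_on_inverse: "infinitely_differentiable_on {0<..} inverse"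
proof -
  have "\<exists>c k. h = (\<lambda>t. c * inverse t ^ k) \<Longrightarrow> infinitely_differentiable_on {0<..} h" for h
  proof (coinduction arbitrary: h)
    case infinitely_differentiable_on
    then obtain c k where h: "h = (\<lambda>t. c * inverse t ^ k)"
      by blast
    have "\<forall>t\<in>{0<..}. (h has_real_derivative (- c * real k) * inverse t ^ Suc k) (at t)"
    proof
      fix t :: real assume "t \<in> {0<..}"
      then have d: "((\<lambda>t. c * inverse t ^ k) has_real_derivative
          c * (real k * inverse t ^ (k - 1) * (- (inverse t ^ 2)))) (at t)"
        by (auto intro!: derivative_eq_intros simp: power2_eq_square)
      have e: "c * (real k * inverse t ^ (k - 1) * (- (inverse t ^ 2))) = (- c * real k) * inverse t ^ Suc k"
        by (cases k) (auto simp: power2_eq_square)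
      show "(h has_real_derivative (- c * real k) * inverse t ^ Suc k) (at t)"
        using d unfolding h e .
    qed
    moreover have "\<exists>c' k'. (\<lambda>t. (- c * real k) * inverse t ^ Suc k) = (\<lambda>t. c' * inverse t ^ k')"
      by blast
    ultimately show ?case
      by blast
  qed
  then show ?thesis
    by (metis (no_types) mult_1 power_one_right)
qed

lemma infinitely_differentiable_on_ln: "infinitely_differentiable_on {0<..} ln"
  using infinitely_differentiable_on_inverse
  by (rule infinitely_differentiable_on.intros) (auto intro!: derivative_eq_intros simp: field_simps)

lemma infinitely_differentiable_on_divide:
  assumes "infinitely_differentiable_on S f" "infinitely_differentiable_on S g" "\<And>t. t \<in> S \<Longrightarrow> g t > 0"
  shows "infinitely_differentiable_on S (\<lambda>t. f t / g t)"
  using infinitely_differentiable_on_mult[OF assms(1)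
      infinitely_differentiable_on_compose[OF infinitely_differentiable_on_inverse assms(2)]] assms(3)
  by (simp add: divide_inverse)

text \<open>For \<open>p = 1\<close> this is the flat function \<open>exp (-1/t)\<close>, extended by 0; the family is
  closed under differentiation.\<close>

definition flat_poly :: "real poly \<Rightarrow> real \<Rightarrow> real" where
  "flat_poly p t = (if t > 0 then poly p (inverse t) * exp (- inverse t) else 0)"

definition flat_pderiv :: "real poly \<Rightarrow> real poly" where
  "flat_pderiv p = [:0, 0, 1:] * (p - pderiv p)"

lemma poly_times_exp_neg_tendsto_0: "((\<lambda>x. poly p x * exp (- x)) \<longlongrightarrow> (0::real)) at_top"
proof -
  have "poly p x * exp (- x) = (\<Sum>i\<le>degree p. coeff p i * (x ^ i / exp x))" for x :: real
    by (simp add: poly_altdef sum_distrib_right exp_minus divide_inverse mult.assoc)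
  then show ?thesis
    by (simp only:) (intro tendsto_null_sum tendsto_mult_right_zero tendsto_power_div_exp_0)
qed

lemma flat_poly_tendsto_0: "(flat_poly p \<longlongrightarrow> 0) (at 0)"
proof (rule filterlim_split_at)
  have "eventually (\<lambda>y. y \<in> {-1<..<0}) (at_left (0::real))"
    by (rule eventually_at_left_real) simp
  then have "eventually (\<lambda>y. flat_poly p y = 0) (at_left (0::real))"
    by eventually_elim (simp add: flat_poly_def)
  then show "(flat_poly p \<longlongrightarrow> 0) (at_left 0)"
    by (rule tendsto_eventually)
  have "((\<lambda>y. poly p (inverse y) * exp (- inverse y)) \<longlongrightarrow> 0) (at_right (0::real))"
    using filterlim_compose[OF poly_times_exp_neg_tendsto_0 filterlim_inverse_at_top_right] by simp
  moreover have "eventually (\<lambda>y. poly p (inverse y) * exp (- inverse y) = flat_poly p y) (at_right (0::real))"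
    using eventually_at_right_less[of "0::real"] by eventually_elim (auto simp: flat_poly_def)
  ultimately show "(flat_poly p \<longlongrightarrow> 0) (at_right 0)"
    by (rule Lim_transform_eventually)
qed

lemma flat_poly_has_derivative: "(flat_poly p has_real_derivative flat_poly (flat_pderiv p) t) (at t)"
proof (cases t "0::real" rule: linorder_cases)
  case less
  have "((\<lambda>s. 0) has_real_derivative flat_poly (flat_pderiv p) t) (at t)"
    using less by (simp add: flat_poly_def)
  then show ?thesis
    by (rule has_field_derivative_transform_within_open[of _ _ _ "{..<0}"]) (use less in \<open>auto simp: flat_poly_def\<close>)
next
  case equal
  have "(\<lambda>y. (flat_poly p y - flat_poly p 0) / (y - 0)) = flat_poly (pCons 0 p)"
    by (auto simp: flat_poly_def divide_inverse mult_ac fun_eq_iff)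
  then show ?thesis
    using equal flat_poly_tendsto_0 by (simp add: has_field_derivative_iff flat_poly_def)
next
  case greater
  have "((\<lambda>s. poly p (inverse s) * exp (- inverse s)) has_real_derivative
      poly (pderiv p) (inverse t) * (- (inverse t * inverse t)) * exp (- inverse t)
      + poly p (inverse t) * (exp (- inverse t) * (inverse t * inverse t))) (at t)"
    using greater
    by (auto intro!: derivative_eq_intros DERIV_chain2[OF poly_DERIV] simp: power2_eq_square)
  then have "((\<lambda>s. poly p (inverse s) * exp (- inverse s)) has_real_derivative flat_poly (flat_pderiv p) t) (at t)"
    using greater by (simp add: flat_poly_def flat_pderiv_def algebra_simps)
  then show ?thesis
    by (rule has_field_derivative_transform_within_open[of _ _ _ "{0<..}"]) (use greater in \<open>auto simp: flat_poly_def\<close>)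
qed

lemma infinitely_differentiable_on_flat_poly: "infinitely_differentiable_on S (flat_poly p)"
proof -
  have "h \<in> range flat_poly \<Longrightarrow> infinitely_differentiable_on S h" for h
  proof (coinduction arbitrary: h)
    case infinitely_differentiable_on
    then show ?case
      using flat_poly_has_derivative by blast
  qed
  then show ?thesis
    by blast
qed

section \<open>A continuum of minimal fibres\<close>

definition smooth_step :: "real \<Rightarrow> real" where
  "smooth_step t = flat_poly 1 t / (flat_poly 1 t + flat_poly 1 (1 - t))"

lemma smooth_step_denominator_pos: "flat_poly 1 t + flat_poly 1 (1 - t) > 0"
  by (cases "t > 0") (auto simp: flat_poly_def add_pos_nonneg add_nonneg_pos)

lemma smooth_step_eq_0: "t \<le> 0 \<Longrightarrow> smooth_step t = 0"
  by (simp add: smooth_step_def flat_poly_def)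

lemma smooth_step_eq_1: "t \<ge> 1 \<Longrightarrow> smooth_step t = 1"
  by (simp add: smooth_step_def flat_poly_def)

lemma infinitely_differentiable_on_smooth_step_affine:
  "infinitely_differentiable_on S (\<lambda>t. smooth_step (a * t + b))"
proof -
  have "infinitely_differentiable_on UNIV smooth_step"
    unfolding smooth_step_def[abs_def] using smooth_step_denominator_pos
    by (intro infinitely_differentiable_on_divide infinitely_differentiable_on_add
        infinitely_differentiable_on_flat_poly
        infinitely_differentiable_on_compose[OF infinitely_differentiable_on_flat_poly
          infinitely_differentiable_on_affine[of _ "-1" 1], simplified]) auto
  then show ?thesis
    by (rule infinitely_differentiable_on_compose[OF _ infinitely_differentiable_on_affine]) simp
qed

definition bump :: "real \<Rightarrow> real" where
  "bump t = smooth_step (5 * t - 1) * smooth_step (4 - 5 * t)"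

lemma bump_eq_0: "t \<le> 1/5 \<or> t \<ge> 4/5 \<Longrightarrow> bump t = 0"
  by (auto simp: bump_def smooth_step_eq_0)

lemma bump_eq_1: "2/5 \<le> t \<Longrightarrow> t \<le> 3/5 \<Longrightarrow> bump t = 1"
  by (simp add: bump_def smooth_step_eq_1)

lemma infinitely_differentiable_on_bump: "infinitely_differentiable_on S bump"
  using infinitely_differentiable_on_mult[OF
      infinitely_differentiable_on_smooth_step_affine[of S 5 "-1"]
      infinitely_differentiable_on_smooth_step_affine[of S "-5" 4]]
  unfolding bump_def[abs_def] by simp

definition binary_entropy :: "real \<Rightarrow> real" where
  "binary_entropy t = - (t * ln t + (1 - t) * ln (1 - t))"

lemma infinitely_differentiable_on_binary_entropy:
  "infinitely_differentiable_on {0<..<1} binary_entropy"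
proof -
  have ln_affine: "infinitely_differentiable_on {0<..<1} (\<lambda>t. ln (a * t + b))"
    if "\<And>t. t \<in> {0<..<1} \<Longrightarrow> a * t + b > 0" for a b
    using that by (intro infinitely_differentiable_on_compose[OF infinitely_differentiable_on_ln
          infinitely_differentiable_on_affine]) auto
  have "infinitely_differentiable_on {0<..<1}
      (\<lambda>t. (-1) * ((1 * t + 0) * ln (1 * t + 0) + ((-1) * t + 1) * ln ((-1) * t + 1)))"
    by (intro infinitely_differentiable_on_mult infinitely_differentiable_on_add
        infinitely_differentiable_on_const infinitely_differentiable_on_affine ln_affine) auto
  then show ?thesis
    by (simp add: binary_entropy_def[abs_def])
qed

definition truncated_entropy :: "real \<Rightarrow> real" where
  "truncated_entropy t = bump t * binary_entropy t"

lemma truncated_entropy_eq_0: "t < 1/5 \<or> t > 4/5 \<Longrightarrow> truncated_entropy t = 0"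
  by (auto simp: truncated_entropy_def bump_eq_0)

lemma smooth_on_cubic_plus_truncated_entropy:
  "smooth_on UNIV (\<lambda>t. c * t ^ 3 + truncated_entropy t)"
proof -
  let ?O = "{t. t < 1/5} \<union> {t::real. 4/5 < t}"
  have "open ?O"
    by (intro open_Un open_Collect_less continuous_intros)
  have cubic: "infinitely_differentiable_on S (\<lambda>t. c * t ^ 3)" for S
    using infinitely_differentiable_on_mult[OF infinitely_differentiable_on_const
        infinitely_differentiable_on_mult[OF infinitely_differentiable_on_ident
          infinitely_differentiable_on_mult[OF infinitely_differentiable_on_ident
            infinitely_differentiable_on_ident]]]
    by (simp add: power3_eq_cube mult.assoc)
  have "smooth_on {0<..<1} (\<lambda>t. c * t ^ 3 + truncated_entropy t)"
    unfolding truncated_entropy_def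
    by (intro infinitely_differentiable_on_imp_smooth_on infinitely_differentiable_on_add cubic
        infinitely_differentiable_on_mult infinitely_differentiable_on_bump
        infinitely_differentiable_on_binary_entropy) simp
  moreover have "smooth_on ?O (\<lambda>t. c * t ^ 3 + truncated_entropy t)"
    using truncated_entropy_eq_0
    by (intro infinitely_differentiable_on_imp_smooth_on[OF \<open>open ?O\<close>]
        infinitely_differentiable_on_cong[OF \<open>open ?O\<close> cubic]) auto
  moreover have "{0<..<1} \<union> ?O = UNIV"
    by auto
  ultimately show ?thesis
    unfolding smooth_on_def by (metis Un_iff UNIV_I)
qed

lemma binary_entropy_has_derivative:
  "0 < t \<Longrightarrow> t < 1 \<Longrightarrow> (binary_entropy has_real_derivative ln (1 - t) - ln t) (at t)"
  unfolding binary_entropy_def[abs_def] by (auto intro!: derivative_eq_intros)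

lemma crit_eqn_cubic_plus_truncated_entropy:
  assumes t: "t \<in> {2/5<..<3/5}"
  shows "crit_eqn (\<lambda>t. c * t ^ 3 + truncated_entropy t) t = 0"
proof -
  let ?I = "{2/5<..<3/5::real}"
  have "crit_eqn (\<lambda>t. c * t ^ 3 + truncated_entropy t) t
      = 3 * t - 2 + t * (1 - t)\<^sup>2 * (t * (6 * c - 1 / (1 - t)\<^sup>2 + 1 / t\<^sup>2) - (6 * c * t - 1 / (1 - t) - 1 / t))"
  proof (rule crit_eqn_eqI[where S = ?I and g = "\<lambda>t. c * t ^ 3 + binary_entropy t"
        and g' = "\<lambda>t. 3 * c * t\<^sup>2 + ln (1 - t) - ln t" and g'' = "\<lambda>t. 6 * c * t - 1 / (1 - t) - 1 / t"])
    fix s assume s: "s \<in> ?I"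
    then show "c * s ^ 3 + truncated_entropy s = c * s ^ 3 + binary_entropy s"
      by (simp add: truncated_entropy_def bump_eq_1)
    show "((\<lambda>t. c * t ^ 3 + binary_entropy t) has_real_derivative 3 * c * s\<^sup>2 + ln (1 - s) - ln s) (at s)"
      using s binary_entropy_has_derivative[of s]
      by (auto intro!: derivative_eq_intros simp: power2_eq_square)
    show "((\<lambda>t. 3 * c * t\<^sup>2 + ln (1 - t) - ln t) has_real_derivative 6 * c * s - 1 / (1 - s) - 1 / s) (at s)"
      using s by (auto intro!: derivative_eq_intros simp: field_simps)
    show "((\<lambda>t. 6 * c * t - 1 / (1 - t) - 1 / t) has_real_derivative 6 * c - 1 / (1 - s)\<^sup>2 + 1 / s\<^sup>2) (at s)"
      using s by (auto intro!: derivative_eq_intros simp: field_simps power2_eq_square)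
  qed (use t in auto)
  also have "\<dots> = 0"
  proof -
    define u v where "u = 1 / (1 - t)" "v = 1 / t"
    have "u * (1 - t) = 1" "v * t = 1" "1 / (1 - t)\<^sup>2 = u\<^sup>2" "1 / t\<^sup>2 = v\<^sup>2"
      using t by (simp_all add: u_v_def power_one_over)
    then show ?thesis
      unfolding u_v_def[symmetric] by algebra
  qed
  finally show ?thesis .
qed

lemma thrice_differentiable_truncated_entropy: "thrice_differentiable_on UNIV truncated_entropy"
  using smooth_on_imp_thrice_differentiable_on[OF smooth_on_cubic_plus_truncated_entropy[of 0]] by simp

lemma deriv2_truncated_entropy_eq_0:
  assumes "t < 1/5 \<or> t > 4/5"
  shows "deriv (deriv truncated_entropy) t = 0"
proof -
  have "open ({s. s < 1/5} \<union> {s::real. 4/5 < s})"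
    by (intro open_Un open_Collect_less continuous_intros)
  then have "eventually (\<lambda>s. s \<in> {s. s < 1/5} \<union> {s. 4/5 < s}) (nhds t)"
    using assms by (intro eventually_nhds_in_open) auto
  then have "eventually (\<lambda>s. truncated_entropy s = 0) (nhds t)"
    by eventually_elim (auto intro: truncated_entropy_eq_0)
  then have "(deriv ^^ 2) truncated_entropy t = (deriv ^^ 2) (\<lambda>_. 0) t"
    by (rule higher_deriv_cong_ev) simp
  then show ?thesis
    by (simp add: numeral_2_eq_2)
qed

lemma deriv2_truncated_entropy_bounded:
  obtains B where "\<And>t. t \<in> {1/5..4/5} \<Longrightarrow> \<bar>deriv (deriv truncated_entropy) t\<bar> \<le> B"
proof -
  have "continuous_on {1/5..4/5} (deriv (deriv truncated_entropy))"
    using thrice_differentiable_truncated_entropy unfolding thrice_differentiable_on_def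
    by (intro continuous_at_imp_continuous_on) (auto intro: DERIV_isCont)
  then have "bounded (deriv (deriv truncated_entropy) ` {1/5..4/5})"
    by (intro compact_imp_bounded compact_continuous_image) auto
  with that show ?thesis
    unfolding bounded_iff by fastforce
qed

lemma coh1_metric_cubic_plus_truncated_entropy:
  obtains c where "coh1_metric (\<lambda>t. c * t ^ 3 + truncated_entropy t)"
proof -
  let ?\<Phi> = truncated_entropy
  have \<Phi>: "(?\<Phi> has_real_derivative deriv ?\<Phi> t) (at t)"
    "(deriv ?\<Phi> has_real_derivative deriv (deriv ?\<Phi>) t) (at t)" for t
    using thrice_differentiable_truncated_entropy by (simp_all add: thrice_differentiable_on_def)
  obtain B where B: "\<And>t. t \<in> {1/5..4/5} \<Longrightarrow> \<bar>deriv (deriv ?\<Phi>) t\<bar> \<le> B"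
    using deriv2_truncated_entropy_bounded by blast
  define c where "c = \<bar>B\<bar> + 1"
  define f where "f = (\<lambda>t. c * t ^ 3 + ?\<Phi> t)"
  have "deriv f = (\<lambda>t. 3 * c * t\<^sup>2 + deriv ?\<Phi> t)"
    unfolding f_def by (intro ext DERIV_imp_deriv) (auto intro!: derivative_eq_intros \<Phi>(1))
  then have f'': "deriv (deriv f) t = 6 * c * t + deriv (deriv ?\<Phi>) t" for t
    by (auto intro!: DERIV_imp_deriv derivative_eq_intros \<Phi>(2))
  have "coh1_metric f"
  proof (rule coh1_metricI[of UNIV])
    show "smooth_on UNIV f"
      unfolding f_def by (rule smooth_on_cubic_plus_truncated_entropy)
    fix t :: real assume t: "0 < t" "t < 1"
    have "deriv (deriv f) t \<ge> 0"
    proof (cases "t \<in> {1/5..4/5}")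
      case True
      then have "6 * c * t \<ge> 6 * c * (1/5)"
        by (intro mult_left_mono) (auto simp: c_def)
      moreover have "6 * c * (1/5) \<ge> \<bar>B\<bar>"
        by (simp add: c_def)
      ultimately show ?thesis
        using B[OF True] unfolding f'' by linarith
    next
      case False
      then have "deriv (deriv ?\<Phi>) t = 0"
        by (intro deriv2_truncated_entropy_eq_0) auto
      moreover have "6 * c * t \<ge> 0"
        using t by (simp add: c_def)
      ultimately show ?thesis
        unfolding f'' by simp
    qed
    moreover have "- 1 / (t * (1 - t)) < 0"
      using t by (simp add: divide_neg_pos)
    ultimately show "deriv (deriv f) t > - 1 / (t * (1 - t))"
      by linarith
  qed auto
  then show ?thesis
    using that unfolding f_def by blast
qed

lemma exists_coh1_metric_uncountable_minimal_fibres: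
  "\<exists>f. coh1_metric f \<and> uncountable {x. minimal_fibre f x}"
proof -
  obtain c where coh1: "coh1_metric (\<lambda>t. c * t ^ 3 + truncated_entropy t)"
    by (rule coh1_metric_cubic_plus_truncated_entropy)
  have "{2/5<..<3/5} \<subseteq> {t \<in> {0<..<1}. crit_eqn (\<lambda>t. c * t ^ 3 + truncated_entropy t) t = 0}"
    using crit_eqn_cubic_plus_truncated_entropy by auto
  then have "(\<lambda>t. (t / 2, t / 2)) ` {2/5<..<3/5} \<subseteq> {x. minimal_fibre (\<lambda>t. c * t ^ 3 + truncated_entropy t) x}"
    unfolding minimal_fibres_eq[OF coh1] by (rule image_mono)
  moreover have "uncountable ((\<lambda>t. (t / 2, t / 2)) ` {2/5<..<3/5::real})"
    using countable_image_inj_on[of "\<lambda>t. (t / 2, t / 2)" "{2/5<..<3/5::real}"]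
      uncountable_open_interval[of "2/5" "3/5::real"]
    by (auto simp: inj_on_def)
  ultimately show ?thesis
    using coh1 countable_subset by blast
qed

section \<open>Prescribed minimal fibres\<close>

lemma compact_exists_positive_combination:
  fixes g w :: "'a::topological_space \<Rightarrow> real"
  assumes K: "compact K" and cont: "continuous_on K g" "continuous_on K w"
    and w: "\<And>x. x \<in> K \<Longrightarrow> w x \<ge> 0" and g: "\<And>x. x \<in> K \<Longrightarrow> w x = 0 \<Longrightarrow> g x > 0"
  shows "\<exists>L\<ge>0. \<forall>x\<in>K. g x + L * w x > 0"
proof (cases "\<exists>x\<in>K. g x \<le> 0")
  case False
  then show ?thesis
    by (intro exI[of _ 0]) auto
next
  case True
  let ?N = "K \<inter> g -` {..0}"
  have "compact ?N"
    by (rule closedin_compact[OF K continuous_closedin_preimage[OF cont(1)]]) simp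
  moreover have "?N \<noteq> {}"
    using True by auto
  ultimately obtain x0 where x0: "x0 \<in> ?N" "\<And>y. y \<in> ?N \<Longrightarrow> w x0 \<le> w y"
    using continuous_attains_inf[of ?N w] continuous_on_subset[OF cont(2)] by blast
  obtain x1 where x1: "x1 \<in> K" "\<And>y. y \<in> K \<Longrightarrow> g x1 \<le> g y"
    using continuous_attains_inf[OF K _ cont(1)] True by blast
  have m: "w x0 > 0"
    using x0(1) w[of x0] g[of x0] by force
  define L where "L = (1 - g x1) / w x0"
  have "g x1 \<le> 0"
    using True x1 by force
  then have L: "L \<ge> 0"
    using m by (simp add: L_def)
  have "g x + L * w x > 0" if x: "x \<in> K" for x
  proof (cases "g x \<le> 0")
    case True
    then have "L * w x0 \<le> L * w x"
      using x x0(2) L by (intro mult_left_mono) auto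
    moreover have "L * w x0 = 1 - g x1"
      using m by (simp add: L_def)
    ultimately show ?thesis
      using x1(2)[OF x] by linarith
  next
    case False
    then show ?thesis
      using L w[OF x] by (simp add: add_pos_nonneg)
  qed
  with L show ?thesis
    by blast
qed

lemma deriv_poly: "deriv (poly p) = poly (pderiv p)"
  by (intro ext DERIV_imp_deriv poly_DERIV)

lemma smooth_on_poly: "smooth_on U (poly p)"
proof -
  have "(deriv ^^ n) (poly p) = poly ((pderiv ^^ n) p)" for n
    by (induction n) (auto simp: deriv_poly)
  then show ?thesis
    unfolding smooth_on_def using poly_DERIV real_differentiable_def by metis
qed

lemma pderiv_sum: "pderiv (\<Sum>i\<in>A. f i) = (\<Sum>i\<in>A. pderiv (f i))"
  by (induction A rule: infinite_finite_induct) (auto simp: pderiv_add)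

lemma exists_pderiv_eq: "\<exists>q. pderiv q = (p :: real poly)"
proof -
  let ?q = "\<Sum>i\<le>degree p. monom (coeff p i / real (Suc i)) (Suc i)"
  have "pderiv ?q = (\<Sum>i\<le>degree p. monom (coeff p i) i)"
    by (simp add: pderiv_sum pderiv_monom)
  also have "\<dots> = p"
    by (rule poly_as_sum_of_monoms)
  finally show ?thesis
    by blast
qed

lemma bezout_linear_power:
  fixes p :: "'a::field poly"
  assumes pa: "poly p a \<noteq> 0"
  shows "\<exists>u v. u * p + v * [:-a, 1:] ^ n = 1"
proof (induction n)
  case 0
  show ?case
    by (intro exI[of _ 0] exI[of _ 1]) simp
next
  case (Suc n)
  then obtain u v where uv: "u * p + v * [:-a, 1:] ^ n = 1"
    by blast
  have "poly (v - [:poly v a:]) a = 0" "poly (p - [:poly p a:]) a = 0"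
    by simp_all
  then obtain q r where q: "v - [:poly v a:] = [:-a, 1:] * q" and r: "p - [:poly p a:] = [:-a, 1:] * r"
    unfolding poly_eq_0_iff_dvd dvd_def by blast
  define c where "c = poly v a / poly p a"
  have c: "[:c:] * [:poly p a:] = [:poly v a:]"
    using pa by (simp add: c_def)
  have ring_identity: "(u + C * X) * p + (q - C * r) * (L * X) = u * p + v * X"
    if "v - cv = L * q" "p - cp = L * r" "C * cp = cv" for C L X cv cp :: "'a poly"
    using that by algebra
  have "(u + [:c:] * [:-a, 1:] ^ n) * p + (q - [:c:] * r) * [:-a, 1:] ^ Suc n = u * p + v * [:-a, 1:] ^ n"
    unfolding power_Suc using ring_identity[OF q r c] .
  with uv show ?case
    by (metis (no_types))
qed

lemma bezout_identity_mult:
  fixes p :: "'a::comm_ring_1"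
  assumes "u1 * p + v1 * a = 1" "u2 * p + v2 * b = 1"
  shows "\<exists>u v. u * p + v * (a * b) = 1"
proof -
  have "(u1 * u2 * p + u1 * v2 * b + v1 * a * u2) * p + (v1 * v2) * (a * b)
      = (u1 * p + v1 * a) * (u2 * p + v2 * b)"
    by (simp add: algebra_simps)
  with assms show ?thesis
    by (metis mult_1)
qed

lemma crit_eqn_poly:
  assumes "pderiv (pderiv F) = [:0, 1:] * ([:A:] + M)"
  shows "crit_eqn (poly F) t = 3 * t - 2 + t ^ 3 * (1 - t)\<^sup>2 * poly (pderiv M) t"
  using assms
  by (simp add: crit_eqn_def deriv_poly pderiv_mult pderiv_add pderiv_pCons algebra_simps
      power2_eq_square power3_eq_cube)

lemma exists_poly_with_zeros:
  fixes T :: "real set"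
  assumes "finite T" "T \<noteq> {}" "T \<subseteq> {0<..<1}"
  obtains P where "\<And>t. poly P t = 0 \<longleftrightarrow> t \<in> T" "poly P 0 < 0" "poly P 1 > 0"
proof -
  obtain s where s: "s \<in> T"
    using assms(2) by blast
  define P where "P = [:-s, 1:] * (\<Prod>r\<in>T. [:-r, 1:]\<^sup>2)"
  have prod: "poly (\<Prod>r\<in>T. [:-r, 1:]\<^sup>2) t = (\<Prod>r\<in>T. (t - r)\<^sup>2)" for t
    by (simp add: poly_prod)
  have "poly P t = 0 \<longleftrightarrow> t \<in> T" for t
    using s assms(1) by (auto simp: P_def prod)
  moreover have "(\<Prod>r\<in>T. (0 - r)\<^sup>2) > 0" "(\<Prod>r\<in>T. (1 - r)\<^sup>2) > (0::real)"
    using assms(3) by (auto intro!: prod_pos)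
  then have "poly P 0 < 0" "poly P 1 > 0"
    using s assms(3) by (auto simp: P_def prod mult_neg_pos)
  ultimately show ?thesis
    using that by blast
qed

lemma exists_poly_crit_eqn_factor:
  fixes P U V :: "real poly"
  assumes UV: "U * P + V * ([:0, 1:] ^ 3 * [:-1, 1:] ^ 2) = 1"
  shows "\<exists>F. (\<forall>t\<in>{0<..<1}. deriv (deriv (poly F)) t \<ge> 0) \<and>
    (\<forall>t. crit_eqn (poly F) t = poly P t * ((3 * t - 2) * poly U t + L * (t ^ 3 * (1 - t)\<^sup>2)))"
proof -
  obtain M where M: "pderiv M = smult L P - [:-2, 3:] * V"
    using exists_pderiv_eq by blast
  have "bounded (poly M ` {0..1})"
    by (intro compact_imp_bounded compact_continuous_image continuous_intros) auto
  then obtain A where A: "\<And>t. t \<in> {0..1} \<Longrightarrow> \<bar>poly M t\<bar> \<le> A"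
    unfolding bounded_iff by fastforce
  obtain F where F: "pderiv (pderiv F) = [:0, 1:] * ([:A:] + M)"
    using exists_pderiv_eq by metis
  have "deriv (deriv (poly F)) t \<ge> 0" if "t \<in> {0<..<1}" for t
    using that A[of t] by (simp add: deriv_poly F)
  moreover have "crit_eqn (poly F) t = poly P t * ((3 * t - 2) * poly U t + L * (t ^ 3 * (1 - t)\<^sup>2))" for t
  proof -
    have UVt: "poly U t * poly P t + poly V t * (t ^ 3 * (1 - t)\<^sup>2) = 1"
      using arg_cong[OF UV, of "\<lambda>q. poly q t"] by (simp add: power2_commute)
    have "crit_eqn (poly F) t = 3 * t - 2 + t ^ 3 * (1 - t)\<^sup>2 * (L * poly P t - (3 * t - 2) * poly V t)"
      unfolding crit_eqn_poly[OF F] M by (simp add: algebra_simps)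
    also have "\<dots> = poly P t * ((3 * t - 2) * poly U t + L * (t ^ 3 * (1 - t)\<^sup>2))"
      using UVt by algebra
    finally show ?thesis .
  qed
  ultimately show ?thesis
    by blast
qed

lemma exists_coh1_metric_prescribed_crit_zeros:
  fixes T :: "real set"
  assumes T: "finite T" "T \<noteq> {}" "T \<subseteq> {0<..<1}"
  shows "\<exists>f. coh1_metric f \<and> {t \<in> {0<..<1}. crit_eqn f t = 0} = T"
proof -
  obtain P where P: "\<And>t. poly P t = 0 \<longleftrightarrow> t \<in> T" "poly P 0 < 0" "poly P 1 > 0"
    using exists_poly_with_zeros[OF T] by blast
  obtain u1 v1 where "u1 * P + v1 * [:0, 1:] ^ 3 = 1"
    using bezout_linear_power[of P 0 3] P(2) by auto
  moreover obtain u2 v2 where "u2 * P + v2 * [:-1, 1:] ^ 2 = 1"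
    using bezout_linear_power[of P 1 2] P(3) by auto
  ultimately obtain U V where UV: "U * P + V * ([:0, 1:] ^ 3 * [:-1, 1:] ^ 2) = 1"
    by (metis bezout_identity_mult)
  have "poly U 0 * poly P 0 > 0" "poly U 1 * poly P 1 > 0"
    using arg_cong[OF UV, of "\<lambda>q. poly q 0"] arg_cong[OF UV, of "\<lambda>q. poly q 1"] by simp_all
  then have U: "poly U 0 < 0" "poly U 1 > 0"
    using P(2,3) by (simp_all add: zero_less_mult_iff)
  let ?W = "\<lambda>t::real. t ^ 3 * (1 - t)\<^sup>2"
  have "\<exists>L\<ge>0. \<forall>t\<in>{0..1}. (3 * t - 2) * poly U t + L * ?W t > 0"
  proof (rule compact_exists_positive_combination)
    fix t :: real assume "t \<in> {0..1}" "?W t = 0"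
    then have "t = 0 \<or> t = 1"
      by simp
    then show "(3 * t - 2) * poly U t > 0"
      using U by (auto simp: mult_neg_neg)
  qed (auto intro!: continuous_intros)
  then obtain L where L: "\<And>t. t \<in> {0..1} \<Longrightarrow> (3 * t - 2) * poly U t + L * ?W t > 0"
    by blast
  obtain F where F: "\<And>t. t \<in> {0<..<1} \<Longrightarrow> deriv (deriv (poly F)) t \<ge> 0"
    and crit: "\<And>t. crit_eqn (poly F) t = poly P t * ((3 * t - 2) * poly U t + L * ?W t)"
    using exists_poly_crit_eqn_factor[OF UV, of L] by blast
  have "coh1_metric (poly F)"
  proof (rule coh1_metricI[OF open_UNIV _ smooth_on_poly])
    fix t :: real assume t: "0 < t" "t < 1"
    have "- 1 / (t * (1 - t)) < 0" "deriv (deriv (poly F)) t \<ge> 0"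
      using t F[of t] by (simp_all add: divide_neg_pos)
    then show "deriv (deriv (poly F)) t > - 1 / (t * (1 - t))"
      by linarith
  qed simp
  moreover have "crit_eqn (poly F) t = 0 \<longleftrightarrow> t \<in> T" if "t \<in> {0<..<1}" for t
    using L[of t] P(1)[of t] that by (simp add: crit)
  then have "{t \<in> {0<..<1}. crit_eqn (poly F) t = 0} = T"
    using T(3) by blast
  ultimately show ?thesis
    by blast
qed

lemma minimal_fibre_on_diagonal:
  assumes "coh1_metric f" "minimal_fibre f x"
  shows "fst x = snd x"
  using assms minimal_fibre_iff[OF assms(1), of "fst x" "snd x"] by simp

lemma exists_coh1_metric_prescribed_minimal_fibres:
  assumes S: "finite S" "S \<noteq> {}" "S \<subseteq> intP \<inter> {x. fst x = snd x}"
  shows "\<exists>f. coh1_metric f \<and> {x. minimal_fibre f x} = S"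
proof -
  define T where "T = (\<lambda>x. fst x + snd x) ` S"
  have "finite T" "T \<noteq> {}" "T \<subseteq> {0<..<1}"
    using S by (auto simp: T_def intP_def)
  then obtain f where f: "coh1_metric f" "{t \<in> {0<..<1}. crit_eqn f t = 0} = T"
    using exists_coh1_metric_prescribed_crit_zeros by blast
  have "(\<lambda>t. (t / 2, t / 2)) ` T = (\<lambda>x. ((fst x + snd x) / 2, (fst x + snd x) / 2)) ` S"
    by (simp add: T_def image_image)
  also have "\<dots> = id ` S"
    using S(3) by (intro image_cong) (auto simp: prod_eq_iff)
  finally show ?thesis
    using f minimal_fibres_eq[OF f(1)] by auto
qed

theorem mainTheorem7:
  shows "(\<forall>f x. coh1_metric f \<and> minimal_fibre f x \<longrightarrow> fst x = snd x)
       \<and> (\<forall>f. coh1_metric f \<and> analytic_metric f \<longrightarrow> finite {x. minimal_fibre f x})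
       \<and> (\<exists>f. coh1_metric f \<and> \<not> analytic_metric f \<and> uncountable {x. minimal_fibre f x})
       \<and> (\<forall>S. finite S \<and> S \<noteq> {} \<and> S \<subseteq> intP \<inter> {x. fst x = snd x} \<longrightarrow>
            (\<exists>f. coh1_metric f \<and> {x. minimal_fibre f x} = S))"
proof (intro conjI allI impI)
  fix f x assume "coh1_metric f \<and> minimal_fibre f x"
  then show "fst x = snd x"
    using minimal_fibre_on_diagonal by blast
next
  fix f assume "coh1_metric f \<and> analytic_metric f"
  then show "finite {x. minimal_fibre f x}"
    using analytic_minimal_fibres_finite by blast
next
  obtain f where f: "coh1_metric f" "uncountable {x. minimal_fibre f x}"
    using exists_coh1_metric_uncountable_minimal_fibres by blast
  then have "\<not> analytic_metric f"
    using analytic_minimal_fibres_finite countable_finite by blast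
  with f show "\<exists>f. coh1_metric f \<and> \<not> analytic_metric f \<and> uncountable {x. minimal_fibre f x}"
    by blast
next
  fix S :: "(real \<times> real) set"
  assume "finite S \<and> S \<noteq> {} \<and> S \<subseteq> intP \<inter> {x. fst x = snd x}"
  then show "\<exists>f. coh1_metric f \<and> {x. minimal_fibre f x} = S"
    using exists_coh1_metric_prescribed_minimal_fibres by blast
qed

end
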